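(* If $w\in S_n$ is fireworks, then $\mathrm{rajcode}(w)=\mathrm{wt}(\overline{D(w)})$.
   Context: Permutations are written in one-line notation. The decreasing runs of $w$ are the maximal consecutive decreasing segments of the one-line notation; $w$ is fireworks if the initial elements of its decreasing runs occur in increasing order. The Rajchgot code $\mathrm{rajcode}(w)=(r_1,\ldots,r_n)$: for each $j$ choose an increasing subsequence of $w(j),\ldots,w(n)$ containing $w(j)$ of greatest length among such subsequences, and let $r_j$ be the number of terms omitted. The Rothe diagram is $D(w)=\{(i,j)\in[n]^2: i<w^{-1}(j),\ j<w(i)\}$ ($i$ is the row, $j$ the column). For a diagram $D\subseteq[n]^2$, its upper closure is $\overline{D}=\{(i,j): i\le i' \text{ for some } (i',j)\in D\}$, and $\mathrm{wt}(D)\in\mathbb{Z}^n$ has $i$-th entry the number of boxes of $D$ in row $i$. *)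

theory Defs
  imports "HOL-Combinatorics.Permutations"
begin

text \<open>Permutations w of [n] = {1..n} are functions nat => nat with w permutes {1..n};
  one-line notation w(1) ... w(n).\<close>

text \<open>Positions starting a decreasing run: position 1, and every position i>1 with
  w(i-1) < w(i) (a run breaks exactly at an ascent).\<close>
definition run_starts :: "nat \<Rightarrow> (nat \<Rightarrow> nat) \<Rightarrow> nat set" where
  "run_starts n w = {i \<in> {1..n}. i = 1 \<or> w (i - 1) < w i}"

definition fireworks :: "nat \<Rightarrow> (nat \<Rightarrow> nat) \<Rightarrow> bool" where
  "fireworks n w \<longleftrightarrow>
     (\<forall>i \<in> run_starts n w. \<forall>j \<in> run_starts n w. i < j \<longrightarrow> w i < w j)"

definition inc_subseqs_from :: "nat \<Rightarrow> (nat \<Rightarrow> nat) \<Rightarrow> nat \<Rightarrow> nat set set" where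
  "inc_subseqs_from n w j = {S. S \<subseteq> {j..n} \<and> j \<in> S \<and> strict_mono_on S w}"

definition rajcode :: "nat \<Rightarrow> (nat \<Rightarrow> nat) \<Rightarrow> nat \<Rightarrow> nat" where
  "rajcode n w j = (n + 1 - j) - Max (card ` inc_subseqs_from n w j)"

definition rothe :: "nat \<Rightarrow> (nat \<Rightarrow> nat) \<Rightarrow> (nat \<times> nat) set" where
  "rothe n w = {(i, j). i \<in> {1..n} \<and> j \<in> {1..n} \<and> i < inv w j \<and> j < w i}"

definition upper_closure :: "nat \<Rightarrow> (nat \<times> nat) set \<Rightarrow> (nat \<times> nat) set" where
  "upper_closure n D = {(i, j). i \<in> {1..n} \<and> j \<in> {1..n} \<and> (\<exists>i'. i \<le> i' \<and> (i', j) \<in> D)}"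

definition wt :: "(nat \<times> nat) set \<Rightarrow> nat \<Rightarrow> nat" where
  "wt D i = card {j. (i, j) \<in> D}"

end

theory Submission
  imports Defs
begin

text \<open>In a fireworks permutation every run start is a left-to-right maximum. From position i
  on, therefore, position i together with all later run starts carries an increasing
  subsequence; none is longer, because an increasing subsequence meets each decreasing run
  at most once. So r_i counts the positions p > i that are not run starts. These are exactly
  the positions p > i preceded, at some i' with i \<le> i' < p, by a larger value, i.e. the
  positions whose values w(p) are the columns of row i of the upper closure of D(w).\<close>

definition run_heads_from :: "nat \<Rightarrow> (nat \<Rightarrow> nat) \<Rightarrow> nat \<Rightarrow> nat set" where
  "run_heads_from n w i = insert i {p \<in> run_starts n w. i < p}"

lemma run_heads_from_subset: "i \<in> {1..n} \<Longrightarrow> run_heads_from n w i \<subseteq> {i..n}"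
  unfolding run_heads_from_def run_starts_def by auto

lemma decreasing_run_le:
  assumes "s \<le> a" "a \<le> n" and no_start: "run_starts n w \<inter> {s<..a} = {}"
  shows "w a \<le> w s"
proof -
  have "w k \<le> w s" if "s \<le> k" "k \<le> a" for k
    using that
  proof (induction k rule: dec_induct)
    case base
    then show ?case by simp
  next
    case (step k)
    then have "Suc k \<notin> run_starts n w"
      using no_start by auto
    then have "w (Suc k) \<le> w k"
      using step \<open>a \<le> n\<close> unfolding run_starts_def by auto
    with step show ?case by simp
  qed
  then show ?thesis using \<open>s \<le> a\<close> by simp
qed

lemma fireworks_run_start_gt:
  assumes fw: "fireworks n w" and p: "p \<in> run_starts n w" and "1 \<le> a" "a < p"
  shows "w a < w p"
proof -
  define T where "T = {s \<in> run_starts n w. s \<le> a}"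
  have T: "q \<in> T \<longleftrightarrow> q \<in> run_starts n w \<and> q \<le> a" for q
    unfolding T_def by simp
  have "a \<le> n" using p \<open>a < p\<close> unfolding run_starts_def by simp
  have "finite T" unfolding T_def run_starts_def by simp
  moreover have "1 \<in> T" using \<open>1 \<le> a\<close> \<open>a \<le> n\<close> by (simp add: T run_starts_def)
  ultimately have "Max T \<in> T" using Max_in by blast
  then have s: "Max T \<in> run_starts n w" "Max T \<le> a" using T by blast+
  moreover have "run_starts n w \<inter> {Max T<..a} = {}"
    using Max_ge[OF \<open>finite T\<close>] T by fastforce
  ultimately have "w a \<le> w (Max T)" using \<open>a \<le> n\<close> by (blast intro: decreasing_run_le)
  also have "\<dots> < w p"
    using fw s p \<open>a < p\<close> unfolding fireworks_def by simp
  finally show ?thesis .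
qed

lemma run_heads_from_inc_subseq:
  assumes "fireworks n w" "i \<in> {1..n}"
  shows "run_heads_from n w i \<in> inc_subseqs_from n w i"
  unfolding inc_subseqs_from_def
proof (intro CollectI conjI strict_mono_onI)
  show "run_heads_from n w i \<subseteq> {i..n}" using assms(2) by (rule run_heads_from_subset)
  show "i \<in> run_heads_from n w i" unfolding run_heads_from_def by simp
  fix a b assume "a \<in> run_heads_from n w i" "b \<in> run_heads_from n w i" "a < b"
  then show "w a < w b"
    using assms run_heads_from_subset[OF assms(2)]
    by (auto simp: run_heads_from_def intro: fireworks_run_start_gt)
qed

text \<open>Each element of an increasing subsequence is sent to the last run head at or before
  it; two elements with the same image would lie in one decreasing run.\<close>
lemma card_inc_subseq_le_run_heads:
  assumes "S \<in> inc_subseqs_from n w i"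
  shows "card S \<le> card (run_heads_from n w i)"
proof -
  let ?R = "run_heads_from n w i"
  have S: "S \<subseteq> {i..n}" "strict_mono_on S w"
    using assms unfolding inc_subseqs_from_def by auto
  have "finite ?R" unfolding run_heads_from_def run_starts_def by simp
  define f where "f a = Max {r \<in> ?R. r \<le> a}" for a
  have f: "f a \<in> ?R" "f a \<le> a" "\<And>r. r \<in> ?R \<Longrightarrow> r \<le> a \<Longrightarrow> r \<le> f a" if "a \<in> S" for a
  proof -
    have fin: "finite {r \<in> ?R. r \<le> a}" using \<open>finite ?R\<close> by simp
    moreover have "i \<in> {r \<in> ?R. r \<le> a}" using that S unfolding run_heads_from_def by auto
    ultimately have "f a \<in> {r \<in> ?R. r \<le> a}" unfolding f_def using Max_in by blast
    then show "f a \<in> ?R" "f a \<le> a" by simp_all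
    show "r \<le> f a" if "r \<in> ?R" "r \<le> a" for r
      unfolding f_def using that by (intro Max_ge[OF fin]) simp
  qed
  have "inj_on f S"
  proof (rule linorder_inj_onI')
    fix a b assume ab: "a \<in> S" "b \<in> S" "a < b"
    show "f a \<noteq> f b"
    proof
      assume same: "f a = f b"
      have "run_starts n w \<inter> {a<..b} = {}"
      proof (rule ccontr)
        assume "run_starts n w \<inter> {a<..b} \<noteq> {}"
        then obtain q where q: "q \<in> run_starts n w" "a < q" "q \<le> b" by auto
        then have "q \<in> ?R" using ab S unfolding run_heads_from_def by force
        then have "q \<le> f a" using f[OF ab(2)] q same by simp
        then show False using f[OF ab(1)] q by simp
      qed
      then have "w b \<le> w a" using decreasing_run_le[of a b n w] ab S by auto
      moreover have "w a < w b" using S(2) ab strict_mono_onD by blast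
      ultimately show False by simp
    qed
  qed
  moreover have "f ` S \<subseteq> ?R" using f by auto
  ultimately show ?thesis using card_inj_on_le \<open>finite ?R\<close> by blast
qed

lemma rajcode_fireworks:
  assumes "fireworks n w" "i \<in> {1..n}"
  shows "rajcode n w i = (n + 1 - i) - card (run_heads_from n w i)"
proof -
  have "finite (inc_subseqs_from n w i)"
    by (rule finite_subset[of _ "Pow {i..n}"]) (auto simp: inc_subseqs_from_def)
  then have "Max (card ` inc_subseqs_from n w i) = card (run_heads_from n w i)"
    using run_heads_from_inc_subseq[OF assms] card_inc_subseq_le_run_heads
    by (intro Max_eqI) auto
  then show ?thesis unfolding rajcode_def by simp
qed

lemma upper_closure_rothe_row:
  assumes perm: "w permutes {1..n}" and i: "i \<in> {1..n}"
  shows "{j. (i, j) \<in> upper_closure n (rothe n w)}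
    = w ` {p \<in> {i<..n}. \<exists>i' \<in> {i..<p}. w p < w i'}"
proof (intro set_eqI iffI)
  fix j assume "j \<in> {j. (i, j) \<in> upper_closure n (rothe n w)}"
  then obtain i' where j: "j \<in> {1..n}" and i': "i \<le> i'" "i' < inv w j" "j < w i'"
    unfolding upper_closure_def rothe_def by auto
  have "w (inv w j) = j" "inv w j \<in> {1..n}"
    using j permutes_inverses(1)[OF perm] permutes_in_image[OF permutes_inv[OF perm]] by auto
  then show "j \<in> w ` {p \<in> {i<..n}. \<exists>i' \<in> {i..<p}. w p < w i'}"
    using i' by (intro image_eqI[of _ _ "inv w j"]) auto
next
  fix j assume "j \<in> w ` {p \<in> {i<..n}. \<exists>i' \<in> {i..<p}. w p < w i'}"
  then obtain p i' where p: "p \<in> {i<..n}" "j = w p" and i': "i' \<in> {i..<p}" "w p < w i'"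
    by blast
  have "inv w j = p" "j \<in> {1..n}"
    using p i permutes_inverses(2)[OF perm] permutes_in_image[OF perm] by auto
  then have "(i', j) \<in> rothe n w" using p i' i unfolding rothe_def by auto
  then show "j \<in> {j. (i, j) \<in> upper_closure n (rothe n w)}"
    using i i' \<open>j \<in> {1..n}\<close> unfolding upper_closure_def by auto
qed

lemma fireworks_larger_before_iff_not_run_start:
  assumes fw: "fireworks n w" and inj: "inj_on w {1..n}" and "1 \<le> i" "i < p" "p \<le> n"
  shows "(\<exists>i' \<in> {i..<p}. w p < w i') \<longleftrightarrow> p \<notin> run_starts n w"
proof
  assume "\<exists>i' \<in> {i..<p}. w p < w i'"
  then obtain i' where i': "i' \<in> {i..<p}" "w p < w i'" by blast
  show "p \<notin> run_starts n w"
  proof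
    assume "p \<in> run_starts n w"
    then have "w i' < w p" using fireworks_run_start_gt[OF fw] i' \<open>1 \<le> i\<close> by simp
    with i' show False by simp
  qed
next
  assume "p \<notin> run_starts n w"
  then have "\<not> w (p - 1) < w p" using assms unfolding run_starts_def by auto
  moreover have "w (p - 1) \<noteq> w p" using assms by (intro inj_on_contraD[OF inj]) auto
  ultimately show "\<exists>i' \<in> {i..<p}. w p < w i'" using assms by (intro bexI[of _ "p - 1"]) auto
qed

lemma wt_upper_closure_rothe_fireworks:
  assumes perm: "w permutes {1..n}" and fw: "fireworks n w" and i: "i \<in> {1..n}"
  shows "wt (upper_closure n (rothe n w)) i = (n + 1 - i) - card (run_heads_from n w i)"
proof -
  let ?R = "run_heads_from n w i"
  have inj: "inj w" using perm by (rule permutes_inj)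
  have "{p \<in> {i<..n}. \<exists>i' \<in> {i..<p}. w p < w i'} = {i..n} - ?R"
    using fireworks_larger_before_iff_not_run_start[OF fw inj_on_subset[OF inj]] i
    by (auto simp: run_heads_from_def run_starts_def)
  then have "wt (upper_closure n (rothe n w)) i = card (w ` ({i..n} - ?R))"
    unfolding wt_def upper_closure_rothe_row[OF perm i] by simp
  also have "\<dots> = card ({i..n} - ?R)"
    using inj by (simp add: card_image inj_on_subset)
  also have "\<dots> = card {i..n} - card ?R"
    using run_heads_from_subset[OF i] by (intro card_Diff_subset) (auto intro: finite_subset)
  finally show ?thesis by simp
qed

theorem lemma3p13:
  fixes n :: nat and w :: "nat \<Rightarrow> nat"
  assumes "w permutes {1..n}"
    and "fireworks n w"
  shows "\<forall>i \<in> {1..n}. rajcode n w i = wt (upper_closure n (rothe n w)) i"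
  using rajcode_fireworks[OF assms(2)] wt_upper_closure_rothe_fireworks[OF assms] by simp

end
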